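(* Let $p$ be a prime and $n,K$ positive integers. (1) If $p^K\equiv1\pmod n$, then $P(p,n)$ divides $p^K-1$. (2) If $p^K\equiv-1\pmod n$, then $P(p,n)$ divides $n(p^K-1)$.
   Context: For positive integers $m,n$, let $\mathbf{Z}_m$ be the integers modulo $m$ and $T:\mathbf{Z}_m^n\to\mathbf{Z}_m^n$, $T(a_0,\dots,a_{n-1})=(a_0+a_1,a_1+a_2,\dots,a_{n-1}+a_0)$. For $\mathbf{a}\in\mathbf{Z}_m^n$ the cycle length of $(T^k\mathbf{a})_{k\ge0}$ is the smallest positive integer $P$ such that there is $N$ with $T^{k+P}\mathbf{a}=T^k\mathbf{a}$ for all $k\ge N$. $P(m,n)$ denotes the maximum of these cycle lengths over all $\mathbf{a}\in\mathbf{Z}_m^n$. *)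

theory Defs
  imports "HOL-Number_Theory.Number_Theory"
begin

text \<open>Elements of Z_m^n are represented as functions a :: nat => nat with
  a i < m for i < n (the residue representatives 0..m-1) and a i = 0 for i >= n.\<close>

definition vecs :: "nat \<Rightarrow> nat \<Rightarrow> (nat \<Rightarrow> nat) set" where
  "vecs m n = {a. (\<forall>i<n. a i < m) \<and> (\<forall>i\<ge>n. a i = 0)}"

definition Tmap :: "nat \<Rightarrow> nat \<Rightarrow> (nat \<Rightarrow> nat) \<Rightarrow> (nat \<Rightarrow> nat)" where
  "Tmap m n a = (\<lambda>i. if i < n then (a i + a ((i + 1) mod n)) mod m else 0)"

definition cycle_length :: "nat \<Rightarrow> nat \<Rightarrow> (nat \<Rightarrow> nat) \<Rightarrow> nat" where
  "cycle_length m n a = (LEAST P. 0 < P \<and>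
     (\<exists>N. \<forall>k\<ge>N. (Tmap m n ^^ (k + P)) a = (Tmap m n ^^ k) a))"

definition Pmax :: "nat \<Rightarrow> nat \<Rightarrow> nat" where
  "Pmax m n = Max (cycle_length m n ` vecs m n)"

end

theory Submission imports Defs begin

(* By induction on j, (T^j a)_i is the sum over l of (j choose l) a_(i+l). For
   j = q = p^K the inner binomial coefficients vanish mod p, so (T^q a)_i = a_i + a_(i+q).
   If q = 1 (mod n) this is T a, so q - 1 is an eventual period of every orbit. If
   q = -1 (mod n) it is T a rotated back by one place; this rotation R commutes with T,
   hence T^(1 + j(q-1)) a = R^j (T a), and R^n = id gives the eventual period n(q-1).
   The least eventual period of an orbit divides all of its eventual periods. *)

definition eventual_period :: "('a \<Rightarrow> 'a) \<Rightarrow> 'a \<Rightarrow> nat \<Rightarrow> bool" where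
  "eventual_period f x P \<longleftrightarrow> (\<exists>N. \<forall>k\<ge>N. (f ^^ (k + P)) x = (f ^^ k) x)"

lemma eventual_period_mult:
  assumes "eventual_period f x P"
  shows "eventual_period f x (t * P)"
proof -
  obtain N where N: "\<forall>k\<ge>N. (f ^^ (k + P)) x = (f ^^ k) x"
    using assms unfolding eventual_period_def by blast
  have "(f ^^ (k + t * P)) x = (f ^^ k) x" if "N \<le> k" for k
  proof (induction t)
    case (Suc t)
    have "(f ^^ (k + Suc t * P)) x = (f ^^ (k + t * P + P)) x" by (simp add: algebra_simps)
    also have "\<dots> = (f ^^ (k + t * P)) x" using N that by simp
    finally show ?case using Suc.IH by simp
  qed simp
  then show ?thesis unfolding eventual_period_def by blast
qed

lemma eventual_period_diff:
  assumes "eventual_period f x P" "eventual_period f x Q" "P \<le> Q"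
  shows "eventual_period f x (Q - P)"
proof -
  obtain N1 where N1: "\<forall>k\<ge>N1. (f ^^ (k + P)) x = (f ^^ k) x"
    using assms(1) unfolding eventual_period_def by blast
  obtain N2 where N2: "\<forall>k\<ge>N2. (f ^^ (k + Q)) x = (f ^^ k) x"
    using assms(2) unfolding eventual_period_def by blast
  have "(f ^^ (k + (Q - P))) x = (f ^^ k) x" if "max N1 N2 \<le> k" for k
  proof -
    have "(f ^^ (k + (Q - P))) x = (f ^^ (k + (Q - P) + P)) x"
      using N1 that by simp
    also have "k + (Q - P) + P = k + Q" using assms(3) by simp
    finally show ?thesis using N2 that by simp
  qed
  then show ?thesis unfolding eventual_period_def by blast
qed

lemma eventual_period_mod:
  assumes "eventual_period f x P" "eventual_period f x Q"
  shows "eventual_period f x (Q mod P)"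
proof -
  have "Q div P * P + Q mod P = Q" by (rule div_mult_mod_eq)
  then have "Q mod P = Q - Q div P * P" "Q div P * P \<le> Q" by linarith+
  then show ?thesis
    using eventual_period_diff[OF eventual_period_mult[OF assms(1)] assms(2)] by simp
qed

lemma Least_eventual_period_dvd:
  assumes "eventual_period f x L" "0 < L"
  shows "(LEAST P. 0 < P \<and> eventual_period f x P) dvd L"
    (is "?P0 dvd L")
proof -
  have "0 < L \<and> eventual_period f x L" using assms by simp
  then have P0: "0 < ?P0 \<and> eventual_period f x ?P0" by (rule LeastI)
  have "L mod ?P0 < ?P0" using P0 by simp
  then have "\<not> (0 < L mod ?P0 \<and> eventual_period f x (L mod ?P0))"
    using not_less_Least by blast
  then show ?thesis
    using eventual_period_mod[OF conjunct2[OF P0] assms(1)] by (simp add: dvd_eq_mod_eq_0)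
qed

lemma eventual_period_if_funpow_Suc:
  assumes "(f ^^ Suc L) x = f x"
  shows "eventual_period f x L"
proof -
  have "(f ^^ (k + L)) x = (f ^^ k) x" if k_pos: "1 \<le> k" for k
  proof -
    obtain k' where k: "k = Suc k'" using k_pos by (cases k) auto
    have "k + L = k' + Suc L" using k by simp
    then have "(f ^^ (k + L)) x = (f ^^ k') ((f ^^ Suc L) x)"
      by (simp only: funpow_add comp_apply)
    also have "\<dots> = (f ^^ k') (f x)" by (simp only: assms)
    also have "\<dots> = (f ^^ k) x" by (simp only: k funpow_Suc_right comp_apply)
    finally show ?thesis .
  qed
  then show ?thesis unfolding eventual_period_def by blast
qed

lemma funpow_commute_funpow:
  assumes "\<And>y. f (g y) = g (f y)"
  shows "(f ^^ d) ((g ^^ j) y) = (g ^^ j) ((f ^^ d) y)"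
proof -
  have "f ((g ^^ j) y) = (g ^^ j) (f y)" for y
    by (induction j) (simp_all add: assms)
  then show ?thesis by (induction d) simp_all
qed

lemma funpow_Suc_mult_if_commuting:
  assumes "(f ^^ Suc d) x = g (f x)" and "\<And>y. f (g y) = g (f y)"
  shows "(f ^^ Suc (j * d)) x = (g ^^ j) (f x)"
proof (induction j)
  case (Suc j)
  have "Suc (Suc j * d) = d + Suc (j * d)" by simp
  then have "(f ^^ Suc (Suc j * d)) x = (f ^^ d) ((f ^^ Suc (j * d)) x)"
    by (simp only: funpow_add comp_apply)
  also have "\<dots> = (g ^^ j) ((f ^^ d) (f x))"
    by (simp only: Suc.IH funpow_commute_funpow[of f g, OF assms(2)] funpow_swap1)
  also have "\<dots> = (g ^^ j) ((f ^^ Suc d) x)"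
    by (simp only: funpow_Suc_right comp_apply)
  also have "\<dots> = (g ^^ Suc j) (f x)"
    by (subst assms(1)) (simp only: funpow_Suc_right comp_apply)
  finally show ?case .
qed simp

lemma finite_vecs: "finite (vecs m n)"
proof -
  have "vecs m n = {f. \<forall>x. (x \<in> {..<n} \<longrightarrow> f x \<in> {..<m}) \<and> (x \<notin> {..<n} \<longrightarrow> f x = 0)}"
    by (auto simp: vecs_def)
  moreover have "finite {f. \<forall>x. (x \<in> {..<n} \<longrightarrow> f x \<in> {..<m}) \<and> (x \<notin> {..<n} \<longrightarrow> f x = (0::nat))}"
    by (rule finite_set_of_finite_funs) auto
  ultimately show ?thesis by simp
qed

lemma Pmax_dvd:
  assumes "0 < m" "0 < L"
    and "\<And>a. a \<in> vecs m n \<Longrightarrow> eventual_period (Tmap m n) a L"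
  shows "Pmax m n dvd L"
proof -
  have "(\<lambda>_. 0) \<in> vecs m n" using assms(1) by (simp add: vecs_def)
  then have "Pmax m n \<in> cycle_length m n ` vecs m n"
    unfolding Pmax_def using finite_vecs by (intro Max_in) auto
  then obtain a where a: "a \<in> vecs m n" "Pmax m n = cycle_length m n a" by blast
  show ?thesis
    unfolding a(2) cycle_length_def eventual_period_def [symmetric]
    using assms(3)[OF a(1)] assms(2) by (rule Least_eventual_period_dvd)
qed

lemma sum_binomial_Suc:
  fixes g :: "nat \<Rightarrow> nat"
  shows "(\<Sum>l\<le>Suc j. (Suc j choose l) * g l)
       = (\<Sum>l\<le>j. (j choose l) * g l) + (\<Sum>l\<le>j. (j choose l) * g (Suc l))"
proof -
  have "(\<Sum>l\<le>Suc j. (Suc j choose l) * g l) = g 0 + (\<Sum>l\<le>j. (Suc j choose Suc l) * g (Suc l))"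
    by (subst sum.atMost_Suc_shift) simp
  also have "\<dots> = g 0 + (\<Sum>l\<le>j. (j choose Suc l) * g (Suc l)) + (\<Sum>l\<le>j. (j choose l) * g (Suc l))"
    by (simp add: sum.distrib algebra_simps)
  also have "g 0 + (\<Sum>l\<le>j. (j choose Suc l) * g (Suc l)) = (\<Sum>l\<le>Suc j. (j choose l) * g l)"
    by (subst sum.atMost_Suc_shift) simp
  also have "\<dots> = (\<Sum>l\<le>j. (j choose l) * g l)" by simp
  finally show ?thesis .
qed

lemma Tmap_funpow_apply:
  assumes "a \<in> vecs m n" "i < n"
  shows "(Tmap m n ^^ j) a i = (\<Sum>l\<le>j. (j choose l) * a ((i + l) mod n)) mod m"
  using assms(2)
proof (induction j arbitrary: i)
  case 0
  then show ?case using assms(1) by (simp add: vecs_def)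
next
  case (Suc j)
  let ?i' = "(i + 1) mod n"
  have "(\<Sum>l\<le>j. (j choose l) * a ((?i' + l) mod n))
      = (\<Sum>l\<le>j. (j choose l) * a ((i + Suc l) mod n))"
    by (intro sum.cong refl) (simp add: mod_add_left_eq)
  moreover have "?i' < n" using Suc.prems by simp
  moreover have "(Tmap m n ^^ Suc j) a i = ((Tmap m n ^^ j) a i + (Tmap m n ^^ j) a ?i') mod m"
    using Suc.prems by (simp add: Tmap_def)
  ultimately have "(Tmap m n ^^ Suc j) a i
      = ((\<Sum>l\<le>j. (j choose l) * a ((i + l) mod n))
         + (\<Sum>l\<le>j. (j choose l) * a ((i + Suc l) mod n))) mod m"
    using Suc.prems Suc.IH by (simp add: mod_add_eq)
  then show ?case
    using sum_binomial_Suc[of j "\<lambda>l. a ((i + l) mod n)"] by simp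
qed

lemma prime_dvd_prime_power_choose:
  assumes "prime (p::nat)" "0 < l" "l < p ^ K"
  shows "p dvd (p ^ K choose l)"
proof (rule ccontr)
  assume "\<not> p dvd (p ^ K choose l)"
  then have "coprime (p ^ K) (p ^ K choose l)"
    using assms(1) by (simp add: prime_imp_coprime)
  moreover have "l * (p ^ K choose l) = p ^ K * ((p ^ K - 1) choose (l - 1))"
    using times_binomial_minus1_eq[of l "p ^ K"] assms(2) by simp
  ultimately have "p ^ K dvd l"
    by (metis coprime_dvd_mult_left_iff dvd_triv_left)
  then show False using assms(2,3) by (simp add: nat_dvd_not_less)
qed

lemma Tmap_funpow_prime_power_apply:
  assumes "prime p" "a \<in> vecs p n" "i < n"
  shows "(Tmap p n ^^ p ^ K) a i = (a i + a ((i + p ^ K) mod n)) mod p"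
proof -
  let ?q = "p ^ K"
  let ?f = "\<lambda>l. (?q choose l) * a ((i + l) mod n)"
  have "0 < ?q" using assms(1) prime_gt_0_nat by simp
  then have "{..?q} = insert 0 (insert ?q {1..<?q})" by auto
  then have "sum ?f {..?q} = ?f 0 + ?f ?q + sum ?f {1..<?q}"
    using \<open>0 < ?q\<close> by simp
  moreover have "p dvd sum ?f {1..<?q}"
    by (intro dvd_sum) (use prime_dvd_prime_power_choose[OF assms(1)] in auto)
  ultimately have "sum ?f {..?q} mod p = (?f 0 + ?f ?q) mod p"
    by (auto elim!: dvdE simp: algebra_simps)
  then show ?thesis using Tmap_funpow_apply[OF assms(2,3)] assms(3) by simp
qed

lemma Tmap_funpow_vanish: "n \<le> i \<Longrightarrow> 0 < j \<Longrightarrow> (Tmap m n ^^ j) a i = 0"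
  by (cases j) (simp_all add: Tmap_def)

lemma Tmap_funpow_prime_power_cong_1:
  assumes "prime p" "a \<in> vecs p n" "[p ^ K = 1] (mod n)"
  shows "(Tmap p n ^^ p ^ K) a = Tmap p n a"
proof
  fix i
  show "(Tmap p n ^^ p ^ K) a i = Tmap p n a i"
  proof (cases "i < n")
    case True
    have "(i + p ^ K) mod n = (i + 1) mod n"
      using assms(3) unfolding cong_def by (metis mod_add_right_eq)
    then show ?thesis
      using Tmap_funpow_prime_power_apply[OF assms(1,2) True] True by (simp add: Tmap_def)
  qed (use assms(1) prime_gt_0_nat in \<open>simp_all add: Tmap_funpow_vanish Tmap_def\<close>)
qed

definition rotate_vec :: "nat \<Rightarrow> nat \<Rightarrow> (nat \<Rightarrow> nat) \<Rightarrow> (nat \<Rightarrow> nat)" where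
  "rotate_vec n s c = (\<lambda>i. if i < n then c ((i + s) mod n) else 0)"

lemma Tmap_rotate_vec: "Tmap m n (rotate_vec n s c) = rotate_vec n s (Tmap m n c)"
proof
  fix i
  have "((i + 1) mod n + s) mod n = (i + 1 + s) mod n" by (rule mod_add_left_eq)
  moreover have "((i + s) mod n + 1) mod n = (i + s + 1) mod n" by (rule mod_add_left_eq)
  ultimately have "((i + 1) mod n + s) mod n = ((i + s) mod n + 1) mod n"
    by (simp add: ac_simps)
  then show "Tmap m n (rotate_vec n s c) i = rotate_vec n s (Tmap m n c) i"
    by (simp add: Tmap_def rotate_vec_def)
qed

lemma funpow_rotate_vec:
  assumes "\<forall>i\<ge>n. c i = 0"
  shows "(rotate_vec n s ^^ j) c = rotate_vec n (j * s) c"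
proof (induction j)
  case 0
  show ?case using assms by (auto simp: rotate_vec_def)
next
  case (Suc j)
  have "(rotate_vec n s ^^ Suc j) c = rotate_vec n s (rotate_vec n (j * s) c)"
    by (simp add: Suc.IH)
  also have "\<dots> = rotate_vec n (Suc j * s) c"
  proof
    fix i
    have "((i + s) mod n + j * s) mod n = (i + Suc j * s) mod n"
      by (simp add: mod_add_left_eq add.assoc)
    then show "rotate_vec n s (rotate_vec n (j * s) c) i = rotate_vec n (Suc j * s) c i"
      by (simp add: rotate_vec_def)
  qed
  finally show ?case .
qed

lemma rotate_vec_mult_self:
  assumes "\<forall>i\<ge>n. c i = 0"
  shows "rotate_vec n (n * s) c = c"
  using assms by (auto simp: rotate_vec_def)

lemma Tmap_funpow_prime_power_cong_minus_1:
  assumes "prime p" "a \<in> vecs p n" "n dvd p ^ K + 1"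
  shows "(Tmap p n ^^ p ^ K) a = rotate_vec n (n - 1) (Tmap p n a)"
proof
  fix i
  show "(Tmap p n ^^ p ^ K) a i = rotate_vec n (n - 1) (Tmap p n a) i"
  proof (cases "i < n")
    case True
    obtain t where t: "p ^ K + 1 = n * t" using assms(3) by blast
    then have "i + p ^ K + n = (i + (n - 1)) + n * t" using True by simp
    then have "(i + p ^ K) mod n = (i + (n - 1)) mod n"
      by (metis mod_add_self2 mod_mult_self2)
    moreover have "((i + (n - 1)) mod n + 1) mod n = (i + (n - 1) + 1) mod n"
      by (rule mod_add_left_eq)
    moreover have "i + (n - 1) + 1 = i + n" using True by simp
    ultimately show ?thesis
      using Tmap_funpow_prime_power_apply[OF assms(1,2) True] True
      by (simp add: Tmap_def rotate_vec_def add.commute)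
  qed (use assms(1) prime_gt_0_nat in \<open>simp_all add: Tmap_funpow_vanish rotate_vec_def\<close>)
qed

lemma Pmax_dvd_prime_power_pred:
  assumes "prime p" "[p ^ K = 1] (mod n)"
  shows "Pmax p n dvd p ^ K - 1"
proof (cases "K = 0")
  case False
  then have "1 < p ^ K" using assms(1) prime_gt_1_nat one_less_power by blast
  then have q: "p ^ K = Suc (p ^ K - 1)" "0 < p ^ K - 1" by simp_all
  show ?thesis
  proof (rule Pmax_dvd[OF prime_gt_0_nat[OF assms(1)] q(2)])
    fix a assume "a \<in> vecs p n"
    then have "(Tmap p n ^^ Suc (p ^ K - 1)) a = Tmap p n a"
      using Tmap_funpow_prime_power_cong_1[OF assms(1) _ assms(2)] q(1) by metis
    then show "eventual_period (Tmap p n) a (p ^ K - 1)" by (rule eventual_period_if_funpow_Suc)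
  qed
qed simp

lemma Pmax_dvd_mult_prime_power_pred:
  assumes "prime p" "0 < n" "n dvd p ^ K + 1"
  shows "Pmax p n dvd n * (p ^ K - 1)"
proof (cases "K = 0")
  case False
  let ?T = "Tmap p n" and ?R = "rotate_vec n (n - 1)"
  have "1 < p ^ K" using False assms(1) prime_gt_1_nat one_less_power by blast
  then have q: "p ^ K = Suc (p ^ K - 1)" "0 < n * (p ^ K - 1)" using assms(2) by simp_all
  show ?thesis
  proof (rule Pmax_dvd[OF prime_gt_0_nat[OF assms(1)] q(2)])
    fix a assume "a \<in> vecs p n"
    then have "(?T ^^ Suc (p ^ K - 1)) a = ?R (?T a)"
      using Tmap_funpow_prime_power_cong_minus_1[OF assms(1) _ assms(3)] q(1) by metis
    then have "(?T ^^ Suc (n * (p ^ K - 1))) a = (?R ^^ n) (?T a)"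
      by (rule funpow_Suc_mult_if_commuting) (rule Tmap_rotate_vec)
    also have "\<dots> = ?T a"
      using funpow_rotate_vec rotate_vec_mult_self by (simp add: Tmap_def)
    finally show "eventual_period ?T a (n * (p ^ K - 1))" by (rule eventual_period_if_funpow_Suc)
  qed
qed simp

theorem proposition2p5:
  fixes p n K :: nat
  assumes "prime p" and "0 < n" and "0 < K"
  shows "([p ^ K = 1] (mod n) \<longrightarrow> Pmax p n dvd p ^ K - 1)
       \<and> ([int p ^ K = - 1] (mod int n) \<longrightarrow> Pmax p n dvd n * (p ^ K - 1))"
proof -
  have "n dvd p ^ K + 1" if "[int p ^ K = - 1] (mod int n)"
  proof -
    have "int n dvd int (p ^ K + 1)" using that by (simp add: cong_iff_dvd_diff add.commute)
    then show ?thesis by (simp only: of_nat_dvd_iff)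
  qed
  then show ?thesis
    using Pmax_dvd_prime_power_pred Pmax_dvd_mult_prime_power_pred assms(1,2) by blast
qed

end
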